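(* There exists a countable abelian group $A$ of torsion-free rank $1$ such that $IAut(A)$ contains a subgroup $\Sigma\cong\prod_p\mathbb{Z}(p)$ with $\Sigma\cap FAut(A)=T(\Sigma)\cong\bigoplus_p\mathbb{Z}(p)$, where $p$ ranges over all primes.
   Context: Abelian groups are written additively. An automorphism $\varphi$ of $A$ is inertial if $(\varphi(X)+X)/X$ is finite for every subgroup $X\le A$; $IAut(A)$ is the subgroup of $\mathrm{Aut}(A)$ generated by the inertial automorphisms. $FAut(A)$ is the group of automorphisms acting as the identity on some subgroup of finite index of $A$. $T(\Sigma)$ denotes the set of elements of finite order of the abelian group $\Sigma$, and $\mathbb{Z}(p)$ is the cyclic group of order $p$. *)

theory Defs
  imports "HOL-Algebra.Algebra"
begin

definition torsion_free_rank_one :: "('a, 'b) monoid_scheme \<Rightarrow> bool" where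
  "torsion_free_rank_one G \<longleftrightarrow>
     (\<exists>a\<in>carrier G. \<forall>n::int. n \<noteq> 0 \<longrightarrow> a [^]\<^bsub>G\<^esub> n \<noteq> \<one>\<^bsub>G\<^esub>) \<and>
     (\<forall>x\<in>carrier G. \<forall>y\<in>carrier G. \<exists>(m::int) (n::int). (m \<noteq> 0 \<or> n \<noteq> 0) \<and>
        x [^]\<^bsub>G\<^esub> m \<otimes>\<^bsub>G\<^esub> y [^]\<^bsub>G\<^esub> n = \<one>\<^bsub>G\<^esub>)"

definition inertial :: "('a, 'b) monoid_scheme \<Rightarrow> ('a \<Rightarrow> 'a) \<Rightarrow> bool" where
  "inertial G \<phi> \<longleftrightarrow> \<phi> \<in> auto G \<and>
     (\<forall>Y. subgroup Y G \<longrightarrow>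
        finite (RCOSETS (G\<lparr>carrier := set_mult G (\<phi> ` Y) Y\<rparr>) Y))"

definition IAut :: "('a, 'b) monoid_scheme \<Rightarrow> ('a \<Rightarrow> 'a) set" where
  "IAut G = generate (AutoGroup G) {\<phi>. inertial G \<phi>}"

definition FAut :: "('a, 'b) monoid_scheme \<Rightarrow> ('a \<Rightarrow> 'a) set" where
  "FAut G = {\<phi> \<in> auto G. \<exists>H. subgroup H G \<and> finite (rcosets\<^bsub>G\<^esub> H) \<and> (\<forall>x\<in>H. \<phi> x = x)}"

definition torsion_part :: "('a, 'b) monoid_scheme \<Rightarrow> 'a set" where
  "torsion_part G = {x \<in> carrier G. \<exists>n::nat. n > 0 \<and> x [^]\<^bsub>G\<^esub> n = \<one>\<^bsub>G\<^esub>}"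

text \<open>The set of all (rational) primes; the qualified name avoids the HOL-Algebra
  notion of prime element of a monoid.\<close>
definition nat_primes :: "nat set" where
  "nat_primes = {p. Factorial_Ring.prime p}"

end

theory Submission
  imports Defs "HOL-Number_Theory.Cong"
begin

text \<open>Take \<open>A = \<int> \<oplus> \<Oplus>\<^sub>p \<int>(p\<^sup>2)\<close>. For \<open>k = (k\<^sub>p) \<in> \<Prod>\<^sub>p \<int>(p)\<close> let \<open>\<alpha>\<^sub>k\<close> fix \<open>\<int>\<close> and multiply
  the \<open>p\<close>-component by \<open>1 + k\<^sub>p p\<close>; since \<open>(1 + a p)(1 + b p) \<equiv> 1 + (a + b) p\<close> mod \<open>p\<^sup>2\<close>,
  \<open>k \<mapsto> \<alpha>\<^sub>k\<close> embeds \<open>\<Prod>\<^sub>p \<int>(p)\<close> into \<open>Aut A\<close>.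
  Each \<open>\<alpha>\<^sub>k\<close> is inertial: \<open>\<delta> = \<alpha>\<^sub>k - 1\<close> maps \<open>A\<close> into the torsion part \<open>T\<close> and acts on every
  finitely generated subgroup of \<open>T\<close> as multiplication by an integer (Chinese remainder theorem),
  so \<open>\<delta>(Y \<inter> T) \<subseteq> Y\<close>; as \<open>Y/(Y \<inter> T)\<close> is cyclic, generated by some \<open>y\<^sub>0\<close>, the quotient
  \<open>(\<alpha>\<^sub>k(Y) + Y)/Y\<close> is generated by the image of the torsion element \<open>\<delta>(y\<^sub>0)\<close>, hence finite.
  If \<open>k\<close> has finite support, \<open>\<alpha>\<^sub>k\<close> is the identity on the finite-index subgroup of elements vanishing
  at that support. Otherwise a finite-index subgroup contains \<open>e\<^sub>p - e\<^sub>q\<close> for some \<open>p \<noteq> q\<close> with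
  \<open>k\<^sub>p \<noteq> 0\<close>, which \<open>\<alpha>\<^sub>k\<close> moves. Since the torsion elements of \<open>\<Prod>\<^sub>p \<int>(p)\<close> are exactly those of
  finite support, this identifies \<open>\<Sigma> \<inter> FAut A\<close> with \<open>T(\<Sigma>) \<cong> \<Oplus>\<^sub>p \<int>(p)\<close>.\<close>

lemma nat_pow_carrier_update: "x [^]\<^bsub>G\<lparr>carrier := S\<rparr>\<^esub> (n::nat) = x [^]\<^bsub>G\<^esub> n"
  by (induction n) simp_all

lemma r_coset_carrier_update: "H #>\<^bsub>G\<lparr>carrier := S\<rparr>\<^esub> a = H #>\<^bsub>G\<^esub> a"
  by (simp add: r_coset_def)

lemma (in group) rcoset_mult_absorb:
  assumes H: "subgroup H G" and h: "h \<in> H" and x: "x \<in> carrier G"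
  shows "H #> (h \<otimes> x) = H #> x"
proof -
  have "h \<in> carrier G" using H h by (rule subgroup.mem_carrier)
  then have "H #> (h \<otimes> x) = (H #> h) #> x" using coset_mult_assoc[OF subgroup.subset[OF H] _ x] by simp
  also have "\<dots> = H #> x" using coset_join2[OF \<open>h \<in> carrier G\<close> H h] by simp
  finally show ?thesis .
qed

lemma iso_image_of_inj_hom:
  assumes G: "group G" and H: "group H" and f: "f \<in> hom G H" "inj_on f (carrier G)"
  shows "H\<lparr>carrier := f ` carrier G\<rparr> \<cong> G"
proof -
  have "subgroup (f ` carrier G) H"
    using G H f(1) by (intro group_hom.img_is_subgroup) (simp add: group_hom_def group_hom_axioms_def)
  then have "carrier (subgroup_generated H (f ` carrier G)) = f ` carrier G"
    by (rule subgroup.carrier_subgroup_generated_subgroup)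
  moreover have "subgroup_generated H (f ` carrier G)
      = H\<lparr>carrier := carrier (subgroup_generated H (f ` carrier G))\<rparr>"
    by (simp add: subgroup_generated_def)
  ultimately have "subgroup_generated H (f ` carrier G) = H\<lparr>carrier := f ` carrier G\<rparr>"
    by simp
  moreover have "f \<in> iso G (subgroup_generated H (f ` carrier G))"
    using iso_onto_image[OF G H] f by simp
  ultimately have "G \<cong> H\<lparr>carrier := f ` carrier G\<rparr>" by (simp add: is_isoI)
  then show ?thesis by (rule group.iso_sym[OF G])
qed

lemma torsion_part_image_of_inj_hom:
  assumes G: "group G" and H: "group H" and f: "f \<in> hom G H" "inj_on f (carrier G)"
  shows "torsion_part (H\<lparr>carrier := f ` carrier G\<rparr>) = f ` torsion_part G"
proof -
  have "f g [^]\<^bsub>H\<^esub> n = \<one>\<^bsub>H\<^esub> \<longleftrightarrow> g [^]\<^bsub>G\<^esub> n = \<one>\<^bsub>G\<^esub>" if g: "g \<in> carrier G" for g and n :: nat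
  proof -
    have "f g [^]\<^bsub>H\<^esub> n = f (g [^]\<^bsub>G\<^esub> n)" "\<one>\<^bsub>H\<^esub> = f \<one>\<^bsub>G\<^esub>"
      using hom_nat_pow[OF f(1) g G H] hom_one[OF f(1) G H] by simp_all
    moreover have "g [^]\<^bsub>G\<^esub> n \<in> carrier G" "\<one>\<^bsub>G\<^esub> \<in> carrier G"
      using g G by (simp_all add: group.is_monoid monoid.nat_pow_closed)
    ultimately show ?thesis using inj_onD[OF f(2)] by auto
  qed
  then show ?thesis by (auto simp: torsion_part_def nat_pow_carrier_update)
qed

section \<open>The group \<open>\<int> \<oplus> \<Oplus>\<^sub>p \<int>(p\<^sup>2)\<close>\<close>

abbreviation prime_nat :: "nat \<Rightarrow> bool" where "prime_nat \<equiv> Factorial_Ring.prime"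

text \<open>An element \<open>(n, e)\<close> has \<open>n \<in> \<int>\<close> and \<open>e p \<in> {0..<p\<^sup>2}\<close> the component in \<open>\<int>(p\<^sup>2)\<close>;
  \<open>e p = 0\<close> whenever \<open>p\<close> is not prime.\<close>
type_synonym elem = "int \<times> (nat \<Rightarrow> int)"

definition esupp :: "elem \<Rightarrow> nat set" where
  "esupp e = {p. snd e p \<noteq> 0}"

definition elems :: "elem set" where
  "elems = {e. (\<forall>p. (prime_nat p \<longrightarrow> 0 \<le> snd e p \<and> snd e p < int p ^ 2) \<and>
                   (\<not> prime_nat p \<longrightarrow> snd e p = 0)) \<and> finite (esupp e)}"

definition eadd :: "elem \<Rightarrow> elem \<Rightarrow> elem" where
  "eadd a b = (fst a + fst b, \<lambda>p. (snd a p + snd b p) mod (int p ^ 2))"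

definition escale :: "int \<Rightarrow> elem \<Rightarrow> elem" where
  "escale m a = (m * fst a, \<lambda>p. (m * snd a p) mod (int p ^ 2))"

definition ezero :: elem where
  "ezero = (0, \<lambda>p. 0)"

lemma elemsD:
  assumes "e \<in> elems"
  shows "prime_nat p \<Longrightarrow> 0 \<le> snd e p" "prime_nat p \<Longrightarrow> snd e p < int p ^ 2"
    "\<not> prime_nat p \<Longrightarrow> snd e p = 0" "finite (esupp e)"
  using assms by (auto simp: elems_def)

lemma esupp_prime: "e \<in> elems \<Longrightarrow> p \<in> esupp e \<Longrightarrow> prime_nat p"
  using elemsD(3)[of e p] by (auto simp: esupp_def)

lemma prime_square_pos: "prime_nat p \<Longrightarrow> (0::int) < int p ^ 2"
  using prime_gt_0_nat by auto

lemma elems_modI: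
  assumes "\<And>p. \<not> prime_nat p \<Longrightarrow> h p = 0" "finite {p. h p \<noteq> 0}"
  shows "(n, \<lambda>p. h p mod (int p ^ 2)) \<in> elems"
proof -
  have "esupp (n, \<lambda>p. h p mod (int p ^ 2)) \<subseteq> {p. h p \<noteq> 0}" by (auto simp: esupp_def)
  then have "finite (esupp (n, \<lambda>p. h p mod (int p ^ 2)))" using assms(2) finite_subset by blast
  then show ?thesis using assms(1) prime_square_pos unfolding elems_def by auto
qed

lemma elems_supp_subsetI:
  assumes "e \<in> elems" "\<And>p. prime_nat p \<Longrightarrow> 0 \<le> h p \<and> h p < int p ^ 2" "\<And>p. h p \<noteq> 0 \<Longrightarrow> snd e p \<noteq> 0"
  shows "(n, h) \<in> elems"
proof -
  have "esupp (n, h) \<subseteq> esupp e" using assms(3) by (auto simp: esupp_def)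
  then have "finite (esupp (n, h))" using elemsD(4)[OF assms(1)] finite_subset by blast
  moreover have "\<not> prime_nat p \<Longrightarrow> h p = 0" for p using assms(3) elemsD(3)[OF assms(1)] by blast
  ultimately show ?thesis using assms(2) unfolding elems_def by simp
qed

lemma elems_mod_self: "e \<in> elems \<Longrightarrow> snd e p mod (int p ^ 2) = snd e p"
  by (cases "prime_nat p") (auto simp: elemsD)

lemma eadd_elems: "a \<in> elems \<Longrightarrow> b \<in> elems \<Longrightarrow> eadd a b \<in> elems"
  unfolding eadd_def
proof (rule elems_modI)
  assume a: "a \<in> elems" and b: "b \<in> elems"
  show "\<not> prime_nat p \<Longrightarrow> snd a p + snd b p = 0" for p using a b by (simp add: elemsD)
  have "{p. snd a p + snd b p \<noteq> 0} \<subseteq> esupp a \<union> esupp b" by (auto simp: esupp_def)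
  then show "finite {p. snd a p + snd b p \<noteq> 0}" using a b elemsD(4) finite_subset by blast
qed

lemma elems_mult_modI: "e \<in> elems \<Longrightarrow> (n, \<lambda>p. (snd e p * c p) mod (int p ^ 2)) \<in> elems"
proof (rule elems_modI)
  assume e: "e \<in> elems"
  show "\<not> prime_nat p \<Longrightarrow> snd e p * c p = 0" for p using e by (simp add: elemsD)
  have "{p. snd e p * c p \<noteq> 0} \<subseteq> esupp e" by (auto simp: esupp_def)
  then show "finite {p. snd e p * c p \<noteq> 0}" using e elemsD(4) finite_subset by blast
qed

lemma escale_elems: "a \<in> elems \<Longrightarrow> escale m a \<in> elems"
  unfolding escale_def using elems_mult_modI[of a _ "\<lambda>_. m"] by (simp add: mult.commute)

lemma ezero_elems: "ezero \<in> elems"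
  by (simp add: elems_def ezero_def esupp_def)

lemma eadd_assoc: "eadd (eadd a b) c = eadd a (eadd b c)"
  by (simp add: eadd_def mod_add_left_eq mod_add_right_eq add.assoc)

lemma eadd_commute: "eadd a b = eadd b a"
  by (simp add: eadd_def add.commute)

lemma eadd_ezero: "a \<in> elems \<Longrightarrow> eadd ezero a = a"
  by (simp add: eadd_def ezero_def elems_mod_self)

lemma eadd_escale_minus_one: "eadd (escale (-1) a) a = ezero"
  by (simp add: eadd_def escale_def ezero_def mod_add_left_eq)

lemma escale_escale: "escale a (escale b e) = escale (a * b) e"
  by (simp add: escale_def mod_mult_right_eq mult.assoc)

lemma eadd_escale_self: "eadd (escale m e) e = escale (m + 1) e"
  by (simp add: eadd_def escale_def mod_add_left_eq mod_add_right_eq algebra_simps)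

lemma escale_zero: "escale 0 e = ezero"
  by (simp add: escale_def ezero_def)

lemma countable_elems: "countable elems"
proof -
  define graph where "graph e = (\<lambda>p. (p, snd e p)) ` esupp e" for e :: elem
  have graph_mem: "(p, snd e p) \<in> graph e' \<Longrightarrow> snd e p = snd e' p" for e e' :: elem and p
    by (auto simp: graph_def)
  have inj: "inj (\<lambda>e. (fst e, graph e))"
  proof (rule injI)
    fix a b :: elem assume eq: "(fst a, graph a) = (fst b, graph b)"
    have "snd a p = snd b p" for p
    proof (cases "p \<in> esupp a \<union> esupp b")
      case True
      moreover have "(p, snd a p) \<in> graph a" if "p \<in> esupp a" using that by (simp add: graph_def)
      moreover have "(p, snd b p) \<in> graph b" if "p \<in> esupp b" using that by (simp add: graph_def)
      ultimately show ?thesis using eq graph_mem by (metis Un_iff prod.inject)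
    next
      case False
      then show ?thesis by (simp add: esupp_def)
    qed
    with eq show "a = b" by (simp add: prod_eq_iff fun_eq_iff)
  qed
  have "(\<lambda>e. (fst e, graph e)) ` elems \<subseteq> UNIV \<times> Collect finite"
    using elemsD(4) by (auto simp: graph_def)
  moreover have "countable (UNIV \<times> Collect finite :: (int \<times> (nat \<times> int) set) set)"
    by (rule countable_SIGMA) (simp_all add: countable_Collect_finite)
  ultimately have "countable ((\<lambda>e. (fst e, graph e)) ` elems)"
    by (rule countable_subset)
  then show ?thesis by (rule countable_image_inj_on[OF _ inj_on_subset[OF inj subset_UNIV]])
qed

lemma infinite_elems: "infinite elems"
proof -
  have "range (\<lambda>n::nat. (int n, \<lambda>p::nat. 0::int)) \<subseteq> elems" by (auto simp: elems_def esupp_def)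
  moreover have "infinite (range (\<lambda>n::nat. (int n, \<lambda>p::nat. 0::int)))"
    by (rule range_inj_infinite) (simp add: inj_def)
  ultimately show ?thesis using infinite_super by blast
qed

text \<open>The group itself lives on \<open>nat\<close>, transported along a bijection with \<open>elems\<close>.\<close>
definition dec :: "nat \<Rightarrow> elem" where "dec = from_nat_into elems"
definition enc :: "elem \<Rightarrow> nat" where "enc = to_nat_on elems"

lemma dec_elems [simp]: "dec x \<in> elems"
  unfolding dec_def using infinite_elems by (metis finite.emptyI from_nat_into)

lemma enc_dec [simp]: "enc (dec x) = x"
  unfolding dec_def enc_def using countable_elems infinite_elems by simp

lemma dec_enc [simp]: "e \<in> elems \<Longrightarrow> dec (enc e) = e"
  unfolding dec_def enc_def using countable_elems by simp

lemma dec_inject: "dec x = dec y \<longleftrightarrow> x = y"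
  by (metis enc_dec)

lemma enc_inject: "a \<in> elems \<Longrightarrow> b \<in> elems \<Longrightarrow> enc a = enc b \<longleftrightarrow> a = b"
  by (metis dec_enc)

definition A :: "nat monoid" where
  "A = \<lparr>carrier = UNIV, monoid.mult = (\<lambda>x y. enc (eadd (dec x) (dec y))), one = enc ezero\<rparr>"

lemma A_simps [simp]:
  "carrier A = UNIV" "x \<otimes>\<^bsub>A\<^esub> y = enc (eadd (dec x) (dec y))" "\<one>\<^bsub>A\<^esub> = enc ezero"
  by (auto simp: A_def)

lemma dec_mult [simp]: "dec (x \<otimes>\<^bsub>A\<^esub> y) = eadd (dec x) (dec y)"
  by (simp add: eadd_elems)

lemma dec_one [simp]: "dec \<one>\<^bsub>A\<^esub> = ezero"
  by (simp add: ezero_elems)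

lemma comm_group_A: "comm_group A"
proof (rule comm_groupI)
  fix x y z :: nat
  show "x \<otimes>\<^bsub>A\<^esub> y \<otimes>\<^bsub>A\<^esub> z = x \<otimes>\<^bsub>A\<^esub> (y \<otimes>\<^bsub>A\<^esub> z)" by (simp add: eadd_elems eadd_assoc)
  show "x \<otimes>\<^bsub>A\<^esub> y = y \<otimes>\<^bsub>A\<^esub> x" by (simp add: eadd_commute)
  show "\<one>\<^bsub>A\<^esub> \<otimes>\<^bsub>A\<^esub> x = x" by (simp add: ezero_elems eadd_ezero)
  show "\<exists>y\<in>carrier A. y \<otimes>\<^bsub>A\<^esub> x = \<one>\<^bsub>A\<^esub>"
    by (rule bexI[of _ "enc (escale (-1) (dec x))"]) (simp_all add: escale_elems eadd_escale_minus_one)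
qed auto

interpretation A: comm_group A by (rule comm_group_A)

lemma dec_nat_pow: "dec (x [^]\<^bsub>A\<^esub> (n::nat)) = escale (int n) (dec x)"
proof (induction n)
  case 0
  then show ?case by (simp add: escale_zero ezero_elems)
next
  case (Suc n)
  then show ?case by (simp add: eadd_escale_self escale_elems add.commute)
qed

lemma dec_inv: "dec (inv\<^bsub>A\<^esub> x) = escale (-1) (dec x)"
proof -
  have "inv\<^bsub>A\<^esub> x = enc (escale (-1) (dec x))"
    by (rule A.inv_equality) (simp_all add: escale_elems eadd_escale_minus_one)
  then show ?thesis by (simp add: escale_elems)
qed

lemma dec_int_pow: "dec (x [^]\<^bsub>A\<^esub> (i::int)) = escale i (dec x)"
proof -
  have pow: "x [^]\<^bsub>A\<^esub> i = (if i < 0 then inv\<^bsub>A\<^esub> (x [^]\<^bsub>A\<^esub> nat (- i)) else x [^]\<^bsub>A\<^esub> nat i)"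
    by (rule int_pow_def2)
  show ?thesis
  proof (cases "i < 0")
    case True
    then have "dec (x [^]\<^bsub>A\<^esub> i) = escale (-1) (escale (int (nat (- i))) (dec x))"
      by (simp only: pow if_True dec_inv dec_nat_pow)
    then show ?thesis using True by (simp add: escale_escale)
  next
    case False
    then have "dec (x [^]\<^bsub>A\<^esub> i) = escale (int (nat i)) (dec x)"
      by (simp only: pow if_False dec_nat_pow)
    then show ?thesis using False by simp
  qed
qed

definition torsion_exponent :: "elem \<Rightarrow> int" where
  "torsion_exponent e = (\<Prod>p\<in>esupp e. int p ^ 2)"

lemma torsion_exponent_pos: "e \<in> elems \<Longrightarrow> 0 < torsion_exponent e"
  unfolding torsion_exponent_def by (intro prod_pos) (simp add: esupp_prime prime_gt_0_nat)

lemma escale_torsion_exponent_multiple: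
  assumes e: "e \<in> elems" and m: "torsion_exponent e dvd m"
  shows "escale m e = (m * fst e, \<lambda>p. 0)"
proof -
  have "(m * snd e p) mod (int p ^ 2) = 0" for p
  proof (cases "p \<in> esupp e")
    case True
    then have "int p ^ 2 dvd torsion_exponent e"
      unfolding torsion_exponent_def using elemsD(4)[OF e] by (intro dvd_prodI)
    then have "int p ^ 2 dvd m" using m by (rule dvd_trans)
    then show ?thesis by simp
  next
    case False
    then show ?thesis by (simp add: esupp_def)
  qed
  then show ?thesis by (simp add: escale_def)
qed

lemma torsion_free_rank_one_A: "torsion_free_rank_one A"
  unfolding torsion_free_rank_one_def
proof (intro conjI ballI)
  have gen: "(1::int, \<lambda>p::nat. 0::int) \<in> elems" by (simp add: elems_def esupp_def)
  show "\<exists>a\<in>carrier A. \<forall>n::int. n \<noteq> 0 \<longrightarrow> a [^]\<^bsub>A\<^esub> n \<noteq> \<one>\<^bsub>A\<^esub>"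
  proof (intro bexI allI impI)
    fix n :: int assume "n \<noteq> 0"
    then have "dec (enc (1, \<lambda>p. 0) [^]\<^bsub>A\<^esub> n) \<noteq> dec \<one>\<^bsub>A\<^esub>"
      using gen by (simp only: dec_int_pow dec_one dec_enc) (simp add: escale_def ezero_def)
    then show "enc (1, \<lambda>p. 0) [^]\<^bsub>A\<^esub> n \<noteq> \<one>\<^bsub>A\<^esub>" by metis
  qed simp
next
  fix x y assume "x \<in> carrier A" "y \<in> carrier A"
  define M where "M = torsion_exponent (dec x) * torsion_exponent (dec y)"
  have "M \<noteq> 0"
    using torsion_exponent_pos[OF dec_elems, of x] torsion_exponent_pos[OF dec_elems, of y]
    by (simp add: M_def)
  have pow_M: "dec (z [^]\<^bsub>A\<^esub> (c * M)) = (c * M * fst (dec z), \<lambda>p. 0)" if "z = x \<or> z = y" for z c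
  proof -
    have "torsion_exponent (dec z) dvd c * M" using that by (auto simp: M_def)
    then show ?thesis by (simp only: dec_int_pow escale_torsion_exponent_multiple[OF dec_elems])
  qed
  define a where "a = (if fst (dec x) = 0 then 1 else fst (dec y))"
  define b where "b = (if fst (dec x) = 0 then 0 else - fst (dec x))"
  have "a * M * fst (dec x) + b * M * fst (dec y) = M * (a * fst (dec x) + b * fst (dec y))"
    by (simp add: algebra_simps)
  also have "\<dots> = 0" by (simp add: a_def b_def)
  finally have "dec (x [^]\<^bsub>A\<^esub> (a * M) \<otimes>\<^bsub>A\<^esub> y [^]\<^bsub>A\<^esub> (b * M)) = dec \<one>\<^bsub>A\<^esub>"
    by (simp only: dec_mult dec_one pow_M[OF disjI1[OF refl]] pow_M[OF disjI2[OF refl]])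
      (simp add: eadd_def ezero_def)
  moreover have "a * M \<noteq> 0 \<or> b * M \<noteq> 0" using \<open>M \<noteq> 0\<close> by (simp add: a_def b_def)
  ultimately show "\<exists>(m::int) (n::int). (m \<noteq> 0 \<or> n \<noteq> 0) \<and> x [^]\<^bsub>A\<^esub> m \<otimes>\<^bsub>A\<^esub> y [^]\<^bsub>A\<^esub> n = \<one>\<^bsub>A\<^esub>"
    using dec_inject by blast
qed

abbreviation Zprod :: "(nat \<Rightarrow> int) monoid" where
  "Zprod \<equiv> product_group nat_primes integer_mod_group"

abbreviation Zsum :: "(nat \<Rightarrow> int) monoid" where
  "Zsum \<equiv> sum_group nat_primes integer_mod_group"

lemma group_Zprod: "group Zprod"
  by (rule product_group) simp

lemma group_Zsum: "group Zsum"
  by (rule sum_group) simp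

lemma mem_nat_primes [simp]: "p \<in> nat_primes \<longleftrightarrow> prime_nat p"
  by (simp add: nat_primes_def)

lemma carrier_Zprod:
  "k \<in> carrier Zprod \<longleftrightarrow> k \<in> extensional nat_primes \<and> (\<forall>p. prime_nat p \<longrightarrow> 0 \<le> k p \<and> k p < int p)"
proof -
  have "carrier (integer_mod_group p) = {0..<int p}" if "prime_nat p" for p
    using that by (auto simp: carrier_integer_mod_group)
  then show ?thesis by (auto simp: PiE_iff)
qed

lemma carrier_Zsum: "carrier Zsum = {k \<in> carrier Zprod. finite {p. prime_nat p \<and> k p \<noteq> 0}}"
  by (simp add: carrier_sum_group)

lemma Zprod_nat_pow:
  "k \<in> carrier Zprod \<Longrightarrow> k [^]\<^bsub>Zprod\<^esub> (n::nat) = (\<lambda>p\<in>nat_primes. (int n * k p) mod int p)"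
proof (induction n)
  case 0
  then show ?case by simp
next
  case (Suc n)
  then have "k [^]\<^bsub>Zprod\<^esub> Suc n
      = (\<lambda>p\<in>nat_primes. ((\<lambda>p\<in>nat_primes. (int n * k p) mod int p) p + k p) mod int p)"
    by simp
  also have "\<dots> = (\<lambda>p\<in>nat_primes. (int (Suc n) * k p) mod int p)"
    by (rule restrict_ext) (simp add: mod_add_left_eq mod_add_right_eq algebra_simps)
  finally show ?case .
qed

lemma torsion_part_Zprod: "torsion_part Zprod = carrier Zsum"
proof -
  have "(\<exists>n::nat. 0 < n \<and> k [^]\<^bsub>Zprod\<^esub> n = \<one>\<^bsub>Zprod\<^esub>) \<longleftrightarrow> finite {p. prime_nat p \<and> k p \<noteq> 0}"
    if k: "k \<in> carrier Zprod" for k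
  proof
    assume "\<exists>n::nat. 0 < n \<and> k [^]\<^bsub>Zprod\<^esub> n = \<one>\<^bsub>Zprod\<^esub>"
    then obtain n :: nat where n: "0 < n" and kn: "k [^]\<^bsub>Zprod\<^esub> n = \<one>\<^bsub>Zprod\<^esub>" by blast
    have "p \<le> n" if p: "prime_nat p" and kp: "k p \<noteq> 0" for p
    proof -
      have "int p dvd int n * k p"
        using fun_cong[OF kn, of p] p by (simp add: Zprod_nat_pow[OF k] mod_eq_0_iff_dvd)
      moreover have "0 < k p" "k p < int p" using k p kp unfolding carrier_Zprod by auto
      then have "\<not> int p dvd k p" using zdvd_imp_le[of "int p" "k p"] by linarith
      moreover have "Factorial_Ring.prime (int p)" using p by simp
      ultimately have "int p dvd int n" using prime_dvd_mult_iff by blast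
      then have "p dvd n" by simp
      then show "p \<le> n" using n by (rule dvd_imp_le)
    qed
    then have "{p. prime_nat p \<and> k p \<noteq> 0} \<subseteq> {..n}" by blast
    then show "finite {p. prime_nat p \<and> k p \<noteq> 0}" using finite_subset by blast
  next
    assume fin: "finite {p. prime_nat p \<and> k p \<noteq> 0}"
    define n where "n = \<Prod>{p. prime_nat p \<and> k p \<noteq> 0}"
    have "0 < n" unfolding n_def using prime_gt_0_nat by (intro prod_pos) auto
    moreover have "(int n * k p) mod int p = 0" if "prime_nat p" for p
    proof (cases "k p = 0")
      case False
      then have "p dvd n" unfolding n_def using fin that by (intro dvd_prodI) auto
      then show ?thesis by simp
    qed simp
    then have "k [^]\<^bsub>Zprod\<^esub> n = (\<lambda>p\<in>nat_primes. 0)"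
      unfolding Zprod_nat_pow[OF k] by (intro restrict_ext) simp
    then have "k [^]\<^bsub>Zprod\<^esub> n = \<one>\<^bsub>Zprod\<^esub>" by simp
    ultimately show "\<exists>n::nat. 0 < n \<and> k [^]\<^bsub>Zprod\<^esub> n = \<one>\<^bsub>Zprod\<^esub>" by blast
  qed
  then show ?thesis unfolding torsion_part_def carrier_Zsum by blast
qed

section \<open>The automorphisms \<open>\<alpha>\<^sub>k\<close>\<close>

lemma one_plus_mult_mod_square:
  fixes f a b p :: int
  shows "(f * (1 + b * p) * (1 + a * p)) mod p ^ 2 = (f * (1 + ((a + b) mod p) * p)) mod p ^ 2"
proof -
  define c d where "c = (a + b) mod p" and "d = (a + b) div p"
  have "a + b = c + p * d" by (simp add: c_def d_def)
  then have b: "b = c + p * d - a" by simp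
  have "f * (1 + b * p) * (1 + a * p) = f * (1 + c * p) + (f * (d + a * b)) * p ^ 2"
    by (simp add: b algebra_simps power2_eq_square)
  then show ?thesis by (simp add: c_def)
qed

lemma one_plus_mult_prime_mod_square:
  assumes p: "prime_nat p" and c: "0 \<le> c" "c < int p"
  shows "(1 + c * int p) mod (int p ^ 2) = 1 + c * int p"
proof -
  have "c * int p \<le> (int p - 1) * int p" using c by (intro mult_right_mono) simp_all
  then have "1 + c * int p < int p ^ 2" using prime_ge_2_nat[OF p]
    by (simp add: power2_eq_square algebra_simps)
  then show ?thesis using c by simp
qed

definition ealpha :: "(nat \<Rightarrow> int) \<Rightarrow> elem \<Rightarrow> elem" where
  "ealpha k e = (fst e, \<lambda>p. (snd e p * (1 + k p * int p)) mod (int p ^ 2))"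

definition edelta :: "(nat \<Rightarrow> int) \<Rightarrow> elem \<Rightarrow> elem" where
  "edelta k e = (0, \<lambda>p. (snd e p * (k p * int p)) mod (int p ^ 2))"

lemma ealpha_elems: "e \<in> elems \<Longrightarrow> ealpha k e \<in> elems"
  unfolding ealpha_def by (rule elems_mult_modI)

lemma edelta_elems: "e \<in> elems \<Longrightarrow> edelta k e \<in> elems"
  unfolding edelta_def by (rule elems_mult_modI)

lemma ealpha_eq_eadd_edelta: "ealpha k e = eadd (edelta k e) e"
  by (simp add: ealpha_def edelta_def eadd_def mod_add_left_eq mod_add_right_eq algebra_simps)

lemma ealpha_eadd: "ealpha k (eadd a b) = eadd (ealpha k a) (ealpha k b)"
  by (simp add: ealpha_def eadd_def mod_mult_left_eq mod_add_eq distrib_right)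

lemma edelta_eadd: "edelta k (eadd a b) = eadd (edelta k a) (edelta k b)"
  by (simp add: edelta_def eadd_def mod_mult_left_eq mod_add_eq distrib_right)

lemma edelta_escale: "edelta k (escale i e) = escale i (edelta k e)"
proof -
  have "((i * snd e p) mod (int p)\<^sup>2 * (k p * int p)) mod (int p)\<^sup>2
        = (i * (snd e p * (k p * int p) mod (int p)\<^sup>2)) mod (int p)\<^sup>2" for p
    by (simp add: mod_mult_left_eq mod_mult_right_eq mult.assoc)
  then show ?thesis by (simp add: edelta_def escale_def)
qed

lemma ealpha_ealpha:
  assumes k: "k \<in> carrier Zprod" and k': "k' \<in> carrier Zprod" and e: "e \<in> elems"
  shows "ealpha k (ealpha k' e) = ealpha (k \<otimes>\<^bsub>Zprod\<^esub> k') e"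
proof -
  have "(snd e p * (1 + k' p * int p) mod (int p)\<^sup>2 * (1 + k p * int p)) mod (int p)\<^sup>2
        = (snd e p * (1 + (k \<otimes>\<^bsub>Zprod\<^esub> k') p * int p)) mod (int p)\<^sup>2" for p
  proof (cases "prime_nat p")
    case True
    have "(snd e p * (1 + k' p * int p) mod (int p)\<^sup>2 * (1 + k p * int p)) mod (int p)\<^sup>2
        = (snd e p * (1 + k' p * int p) * (1 + k p * int p)) mod (int p)\<^sup>2"
      by (simp add: mod_mult_left_eq)
    also have "\<dots> = (snd e p * (1 + ((k p + k' p) mod int p) * int p)) mod (int p)\<^sup>2"
      by (rule one_plus_mult_mod_square)
    finally show ?thesis using True by simp
  next
    case False
    then show ?thesis using elemsD(3)[OF e] by simp
  qed
  then show ?thesis by (simp add: ealpha_def)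
qed

lemma ealpha_one: "e \<in> elems \<Longrightarrow> ealpha \<one>\<^bsub>Zprod\<^esub> e = e"
proof -
  assume e: "e \<in> elems"
  have "(snd e p * (1 + (\<one>\<^bsub>Zprod\<^esub>) p * int p)) mod (int p)\<^sup>2 = snd e p" for p
    by (cases "prime_nat p") (simp_all add: e elems_mod_self elemsD(3))
  then show ?thesis by (simp add: ealpha_def prod_eq_iff)
qed

definition alpha :: "(nat \<Rightarrow> int) \<Rightarrow> nat \<Rightarrow> nat" where
  "alpha k x = enc (ealpha k (dec x))"

definition delta :: "(nat \<Rightarrow> int) \<Rightarrow> nat \<Rightarrow> nat" where
  "delta k x = enc (edelta k (dec x))"

lemma dec_alpha: "dec (alpha k x) = ealpha k (dec x)"
  by (simp add: alpha_def ealpha_elems)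

lemma dec_delta: "dec (delta k x) = edelta k (dec x)"
  by (simp add: delta_def edelta_elems)

lemma alpha_eq_delta_mult: "alpha k x = delta k x \<otimes>\<^bsub>A\<^esub> x"
  by (metis dec_inject dec_mult dec_alpha dec_delta ealpha_eq_eadd_edelta)

lemma delta_mult: "delta k (x \<otimes>\<^bsub>A\<^esub> y) = delta k x \<otimes>\<^bsub>A\<^esub> delta k y"
  by (metis dec_inject dec_mult dec_delta edelta_eadd)

lemma delta_int_pow: "delta k (x [^]\<^bsub>A\<^esub> (i::int)) = delta k x [^]\<^bsub>A\<^esub> i"
  by (metis dec_inject dec_int_pow dec_delta edelta_escale)

lemma alpha_alpha:
  "k \<in> carrier Zprod \<Longrightarrow> k' \<in> carrier Zprod \<Longrightarrow> alpha k (alpha k' x) = alpha (k \<otimes>\<^bsub>Zprod\<^esub> k') x"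
  by (simp add: alpha_def ealpha_elems ealpha_ealpha)

lemma alpha_one: "alpha \<one>\<^bsub>Zprod\<^esub> = (\<lambda>x. x)"
  by (simp add: alpha_def ealpha_one fun_eq_iff del: one_product_group)

lemma alpha_in_hom_A: "alpha k \<in> hom A A"
  by (simp add: hom_def alpha_def ealpha_eadd ealpha_elems eadd_elems)

lemma bij_alpha:
  assumes k: "k \<in> carrier Zprod"
  shows "bij (alpha k)"
proof -
  interpret Zprod: group Zprod by (rule group_Zprod)
  let ?k' = "inv\<^bsub>Zprod\<^esub> k"
  have k': "?k' \<in> carrier Zprod" using k by (rule Zprod.inv_closed)
  have "alpha k \<circ> alpha ?k' = id" "alpha ?k' \<circ> alpha k = id"
    by (simp_all only: fun_eq_iff o_apply id_apply alpha_alpha[OF k k'] alpha_alpha[OF k' k]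
        Zprod.r_inv[OF k] Zprod.l_inv[OF k] alpha_one) simp_all
  then show ?thesis by (intro o_bij)
qed

lemma alpha_in_auto: "k \<in> carrier Zprod \<Longrightarrow> alpha k \<in> auto A"
  using bij_alpha[of k] alpha_in_hom_A[of k] by (simp add: auto_def Bij_def)

lemma AutoGroup_A_mult: "f \<in> auto A \<Longrightarrow> g \<in> auto A \<Longrightarrow> f \<otimes>\<^bsub>AutoGroup A\<^esub> g = (\<lambda>x. f (g x))"
  by (simp add: AutoGroup_def BijGroup_def auto_def compose_def restrict_def)

lemma group_AutoGroup_A: "group (AutoGroup A)"
  by (rule A.AutoGroup)

lemma alpha_in_hom: "alpha \<in> hom Zprod (AutoGroup A)"
proof (rule homI)
  fix k k' assume "k \<in> carrier Zprod" "k' \<in> carrier Zprod"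
  then show "alpha (k \<otimes>\<^bsub>Zprod\<^esub> k') = alpha k \<otimes>\<^bsub>AutoGroup A\<^esub> alpha k'"
    by (simp add: AutoGroup_A_mult alpha_in_auto alpha_alpha fun_eq_iff del: mult_product_group)
qed (simp add: alpha_in_auto AutoGroup_def)

lemma alpha_in_hom_Zsum: "alpha \<in> hom Zsum (AutoGroup A)"
  unfolding sum_group_def by (rule group.hom_from_subgroup_generated[OF group_Zprod alpha_in_hom])

definition eunit :: "nat \<Rightarrow> elem" where
  "eunit p = (0, \<lambda>q. if q = p then 1 else 0)"

lemma one_less_prime_square: "prime_nat p \<Longrightarrow> (1::int) < int p ^ 2"
  using prime_gt_1_nat[of p] by (metis of_nat_1 of_nat_less_iff one_less_power pos2)

lemma eunit_elems: "prime_nat p \<Longrightarrow> eunit p \<in> elems"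
proof -
  assume p: "prime_nat p"
  have "esupp (eunit p) \<subseteq> {p}" by (auto simp: esupp_def eunit_def)
  then show ?thesis
    using p one_less_prime_square[OF p] finite_subset by (auto simp: elems_def eunit_def)
qed

lemma snd_ealpha_eunit:
  assumes p: "prime_nat p" and k: "k \<in> carrier Zprod"
  shows "snd (ealpha k (eunit p)) p = 1 + k p * int p"
  using one_plus_mult_prime_mod_square[OF p] k p unfolding carrier_Zprod
  by (simp add: ealpha_def eunit_def)

lemma inj_on_alpha: "inj_on alpha (carrier Zprod)"
proof (rule inj_onI)
  fix k k' assume k: "k \<in> carrier Zprod" and k': "k' \<in> carrier Zprod" and eq: "alpha k = alpha k'"
  have "k p = k' p" if p: "prime_nat p" for p
  proof -
    have "ealpha k (eunit p) = ealpha k' (eunit p)"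
      using fun_cong[OF eq, of "enc (eunit p)"] p by (simp add: alpha_def eunit_elems ealpha_elems enc_inject)
    then show ?thesis using snd_ealpha_eunit[OF p k] snd_ealpha_eunit[OF p k'] p by simp
  qed
  moreover have "k p = k' p" if "\<not> prime_nat p" for p
    using k k' that unfolding carrier_Zprod extensional_def by simp
  ultimately show "k = k'" by blast
qed

section \<open>Which \<open>\<alpha>\<^sub>k\<close> fix a subgroup of finite index\<close>

definition vanishing_at :: "nat set \<Rightarrow> nat set" where
  "vanishing_at S = {x. \<forall>p\<in>S. snd (dec x) p = 0}"

lemma subgroup_vanishing_at: "subgroup (vanishing_at S) A"
proof (rule A.subgroupI)
  have "\<one>\<^bsub>A\<^esub> \<in> vanishing_at S" by (simp del: A_simps add: vanishing_at_def ezero_def)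
  then show "vanishing_at S \<noteq> {}" by blast
  show "inv\<^bsub>A\<^esub> x \<in> vanishing_at S" if "x \<in> vanishing_at S" for x
    using that by (simp add: vanishing_at_def dec_inv escale_def)
  show "x \<otimes>\<^bsub>A\<^esub> y \<in> vanishing_at S" if "x \<in> vanishing_at S" "y \<in> vanishing_at S" for x y
    using that dec_mult[of x y] by (simp del: A_simps add: vanishing_at_def eadd_def)
qed simp

lemma rcoset_vanishing_at_eq:
  "vanishing_at S #>\<^bsub>A\<^esub> a = vanishing_at S #>\<^bsub>A\<^esub> enc (0, \<lambda>p. if p \<in> S then snd (dec a) p else 0)"
proof -
  define e where "e = dec a"
  have e: "e \<in> elems" by (simp add: e_def)
  define g where "g p = (if p \<in> S then snd e p else 0)" for p
  define h where "h p = (if p \<in> S then 0 else snd e p)" for p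
  have g_elems: "(0, g) \<in> elems" and h_elems: "(fst e, h) \<in> elems"
    using e by (auto intro!: elems_supp_subsetI simp: g_def h_def elemsD)
  have "dec (enc (fst e, h) \<otimes>\<^bsub>A\<^esub> enc (0, g)) = eadd (fst e, h) (0, g)"
    by (simp only: dec_mult dec_enc[OF h_elems] dec_enc[OF g_elems])
  also have "\<dots> = e" by (auto simp: eadd_def prod_eq_iff g_def h_def elems_mod_self[OF e])
  finally have "a = enc (fst e, h) \<otimes>\<^bsub>A\<^esub> enc (0, g)" by (metis e_def dec_inject)
  moreover have "enc (fst e, h) \<in> vanishing_at S" using h_elems by (simp add: vanishing_at_def h_def)
  ultimately have "vanishing_at S #>\<^bsub>A\<^esub> a = vanishing_at S #>\<^bsub>A\<^esub> enc (0, g)"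
    using A.rcoset_mult_absorb[OF subgroup_vanishing_at, where h = "enc (fst e, h)" and x = "enc (0, g)"]
    by (simp del: A_simps add: A_simps(1))
  then show ?thesis by (simp only: e_def g_def[abs_def])
qed

lemma finite_rcosets_vanishing_at:
  assumes S: "finite S"
  shows "finite (rcosets\<^bsub>A\<^esub> vanishing_at S)"
proof -
  let ?H = "vanishing_at S" and ?B = "insert 0 (\<Union>q\<in>S. {0..<int q ^ 2})"
  define R where "R = {g. \<forall>p. (p \<in> S \<longrightarrow> g p \<in> ?B) \<and> (p \<notin> S \<longrightarrow> g p = 0)}"
  have "finite R" unfolding R_def using S by (intro finite_set_of_finite_funs) auto
  moreover have "rcosets\<^bsub>A\<^esub> ?H \<subseteq> (\<lambda>g. ?H #>\<^bsub>A\<^esub> enc (0, g)) ` R"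
  proof
    fix C assume "C \<in> rcosets\<^bsub>A\<^esub> ?H"
    then obtain a where C: "C = ?H #>\<^bsub>A\<^esub> a" by (auto simp: RCOSETS_def)
    define g where "g p = (if p \<in> S then snd (dec a) p else 0)" for p
    have "g p \<in> ?B" if "p \<in> S" for p
    proof (cases "prime_nat p")
      case True
      then show ?thesis using that elemsD(1,2)[OF dec_elems True] by (auto simp: g_def)
    next
      case False
      then show ?thesis using elemsD(3)[OF dec_elems False] by (simp add: g_def)
    qed
    then have "g \<in> R" by (simp add: R_def g_def)
    moreover have "C = ?H #>\<^bsub>A\<^esub> enc (0, g)" unfolding C g_def by (rule rcoset_vanishing_at_eq)
    ultimately show "C \<in> (\<lambda>g. ?H #>\<^bsub>A\<^esub> enc (0, g)) ` R" by blast
  qed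
  ultimately show ?thesis using finite_subset by blast
qed

lemma alpha_fixes_vanishing_at:
  assumes "x \<in> vanishing_at {p. prime_nat p \<and> k p \<noteq> 0}"
  shows "alpha k x = x"
proof -
  have "snd (ealpha k (dec x)) p = snd (dec x) p" for p
  proof (cases "prime_nat p \<and> k p \<noteq> 0")
    case True
    then have "snd (dec x) p = 0" using assms by (simp add: vanishing_at_def)
    then show ?thesis by (simp add: ealpha_def)
  next
    case False
    then have "snd (dec x) p = 0 \<or> k p = 0" using elemsD(3)[OF dec_elems] by blast
    then show ?thesis using elems_mod_self[OF dec_elems, of x p] by (auto simp: ealpha_def)
  qed
  then have "ealpha k (dec x) = dec x" by (simp add: prod_eq_iff fun_eq_iff ealpha_def)
  then show ?thesis by (metis dec_alpha dec_inject)
qed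

lemma alpha_fixed_coordinate:
  assumes k: "k \<in> carrier Zprod" and p: "prime_nat p"
    and fixed: "alpha k x = x" and x: "snd (dec x) p = 1"
  shows "k p = 0"
proof -
  have "(1 + k p * int p) mod (int p ^ 2) = snd (ealpha k (dec x)) p"
    by (simp add: ealpha_def x)
  also have "\<dots> = 1" using x by (simp flip: dec_alpha add: fixed)
  finally have "1 + k p * int p = 1"
    using one_plus_mult_prime_mod_square[OF p] k p unfolding carrier_Zprod by simp
  then show ?thesis using prime_gt_0_nat[OF p] by simp
qed

lemma alpha_in_FAut_iff:
  assumes k: "k \<in> carrier Zprod"
  shows "alpha k \<in> FAut A \<longleftrightarrow> finite {p. prime_nat p \<and> k p \<noteq> 0}"
proof
  assume "finite {p. prime_nat p \<and> k p \<noteq> 0}"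
  then show "alpha k \<in> FAut A"
    using subgroup_vanishing_at finite_rcosets_vanishing_at alpha_fixes_vanishing_at alpha_in_auto[OF k]
    unfolding FAut_def by blast
next
  assume "alpha k \<in> FAut A"
  then obtain H where H: "subgroup H A" "finite (rcosets\<^bsub>A\<^esub> H)" "\<And>x. x \<in> H \<Longrightarrow> alpha k x = x"
    unfolding FAut_def by blast
  show "finite {p. prime_nat p \<and> k p \<noteq> 0}"
  proof (rule ccontr)
    let ?S = "{p. prime_nat p \<and> k p \<noteq> 0}" and ?coset = "\<lambda>p. H #>\<^bsub>A\<^esub> enc (eunit p)"
    assume "infinite ?S"
    moreover have "?coset ` ?S \<subseteq> rcosets\<^bsub>A\<^esub> H" by (auto simp: RCOSETS_def)
    then have "finite (?coset ` ?S)" using H(2) finite_subset by blast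
    ultimately have "\<not> inj_on ?coset ?S" using finite_imageD by blast
    then obtain p q where pq: "p \<in> ?S" "q \<in> ?S" "p \<noteq> q" "?coset p = ?coset q"
      unfolding inj_on_def by blast
    let ?z = "enc (eunit p) \<otimes>\<^bsub>A\<^esub> inv\<^bsub>A\<^esub> enc (eunit q)"
    have "enc (eunit p) \<in> H #>\<^bsub>A\<^esub> enc (eunit q)"
      using A.rcos_self[of "enc (eunit p)" H] H(1) pq(4) by simp
    then have "?z \<in> H" using subgroup.rcos_module_imp[OF H(1) A.is_group] by simp
    moreover have "dec ?z = eadd (eunit p) (escale (-1) (eunit q))"
      using pq(1,2) by (simp only: dec_mult dec_inv) (simp add: eunit_elems)
    then have "snd (dec ?z) p = 1"
      using pq(1,3) one_less_prime_square[of p] by (simp add: eadd_def escale_def eunit_def)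
    ultimately have "k p = 0" using alpha_fixed_coordinate[OF k] H(3) pq(1) by blast
    then show False using pq(1) by simp
  qed
qed

section \<open>The automorphisms \<open>\<alpha>\<^sub>k\<close> are inertial\<close>

lemma edelta_eq_escale:
  assumes e: "e \<in> elems" "fst e = 0" and k: "k \<in> carrier Zprod"
  obtains m :: nat where "edelta k e = escale (int m) e"
proof -
  have "coprime (p ^ 2) (q ^ 2)" if "p \<in> esupp e" "q \<in> esupp e" "p \<noteq> q" for p q
  proof -
    have "coprime p q" using that esupp_prime[OF e(1)] primes_coprime by blast
    then show ?thesis by simp
  qed
  then obtain m :: nat where m: "\<forall>p\<in>esupp e. [m = nat (k p) * p] (mod p ^ 2)"
    using chinese_remainder_nat[of "esupp e" "\<lambda>p. p ^ 2" "\<lambda>p. nat (k p) * p"] elemsD(4)[OF e(1)]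
    by blast
  have "snd (edelta k e) p = snd (escale (int m) e) p" for p
  proof (cases "p \<in> esupp e")
    case True
    then have "0 \<le> k p" using k esupp_prime[OF e(1)] unfolding carrier_Zprod by simp
    then have "[int m = k p * int p] (mod (int p ^ 2))"
      using m True by (metis cong_int_iff int_nat_eq of_nat_mult of_nat_power)
    then have "[int m * snd e p = k p * int p * snd e p] (mod (int p ^ 2))"
      by (rule cong_mult[OF _ cong_refl])
    then show ?thesis by (simp add: edelta_def escale_def cong_def ac_simps)
  next
    case False
    then show ?thesis by (simp add: edelta_def escale_def esupp_def)
  qed
  moreover have "fst (edelta k e) = fst (escale (int m) e)" using e(2) by (simp add: edelta_def escale_def)
  ultimately have "edelta k e = escale (int m) e" by (simp add: prod_eq_iff fun_eq_iff)
  then show ?thesis by (rule that)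
qed

lemma delta_mem_of_fst_zero:
  assumes Y: "subgroup Y A" and y: "y \<in> Y" "fst (dec y) = 0" and k: "k \<in> carrier Zprod"
  shows "delta k y \<in> Y"
proof -
  obtain m :: nat where "edelta k (dec y) = escale (int m) (dec y)"
    using edelta_eq_escale[OF dec_elems y(2) k] .
  then have "delta k y = y [^]\<^bsub>A\<^esub> int m" by (metis dec_inject dec_int_pow dec_delta)
  then show ?thesis using A.subgroup_int_pow_closed[OF Y y(1)] by simp
qed

lemma fst_dec_mult_int_pow: "fst (dec (y \<otimes>\<^bsub>A\<^esub> z [^]\<^bsub>A\<^esub> (q::int))) = fst (dec y) + q * fst (dec z)"
  by (simp only: dec_mult dec_int_pow) (simp add: eadd_def escale_def)

lemma subgroup_fst_pos:
  assumes Y: "subgroup Y A" and y: "y \<in> Y" "fst (dec y) \<noteq> 0"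
  shows "\<exists>z\<in>Y. 0 < fst (dec z)"
proof (cases "0 < fst (dec y)")
  case False
  have "fst (dec (inv\<^bsub>A\<^esub> y)) = - fst (dec y)" by (simp add: dec_inv escale_def)
  then show ?thesis using False y subgroup.m_inv_closed[OF Y y(1)] by force
qed (use y in blast)

text \<open>The image of \<open>Y\<close> in the \<open>\<int>\<close>-component is cyclic.\<close>
lemma subgroup_fst_generator:
  assumes Y: "subgroup Y A"
  obtains y0 where "y0 \<in> Y" "\<And>y. y \<in> Y \<Longrightarrow> \<exists>q::int. fst (dec (y \<otimes>\<^bsub>A\<^esub> y0 [^]\<^bsub>A\<^esub> q)) = 0"
proof (cases "\<forall>y\<in>Y. fst (dec y) = 0")
  case True
  have "fst (dec (y \<otimes>\<^bsub>A\<^esub> \<one>\<^bsub>A\<^esub> [^]\<^bsub>A\<^esub> (0::int))) = 0" if "y \<in> Y" for y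
    using True that by (simp only: fst_dec_mult_int_pow)
  then show ?thesis using that[of "\<one>\<^bsub>A\<^esub>"] subgroup.one_closed[OF Y] by blast
next
  case False
  define pos where "pos n \<longleftrightarrow> 0 < n \<and> (\<exists>y\<in>Y. fst (dec y) = int n)" for n :: nat
  obtain z where "z \<in> Y" "0 < fst (dec z)" using False subgroup_fst_pos[OF Y] by blast
  then have "pos (nat (fst (dec z)))" unfolding pos_def by auto
  define d where "d = (LEAST n. pos n)"
  have "pos d" unfolding d_def by (rule LeastI) fact
  then obtain y0 where y0: "y0 \<in> Y" "fst (dec y0) = int d" and "0 < d" unfolding pos_def by blast
  have "\<exists>q::int. fst (dec (y \<otimes>\<^bsub>A\<^esub> y0 [^]\<^bsub>A\<^esub> q)) = 0" if y: "y \<in> Y" for y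
  proof -
    define r where "r = fst (dec y) mod int d"
    have "fst (dec (y \<otimes>\<^bsub>A\<^esub> y0 [^]\<^bsub>A\<^esub> (- (fst (dec y) div int d))))
        = fst (dec y) + - (fst (dec y) div int d) * int d"
      by (simp only: fst_dec_mult_int_pow y0(2))
    also have "\<dots> = r" by (simp add: r_def minus_div_mult_eq_mod[symmetric])
    finally have r: "fst (dec (y \<otimes>\<^bsub>A\<^esub> y0 [^]\<^bsub>A\<^esub> (- (fst (dec y) div int d)))) = r" .
    have mem: "y \<otimes>\<^bsub>A\<^esub> y0 [^]\<^bsub>A\<^esub> (- (fst (dec y) div int d)) \<in> Y"
      by (rule subgroup.m_closed[OF Y y A.subgroup_int_pow_closed[OF Y y0(1)]])
    have "r = 0"
    proof (rule ccontr)
      assume "r \<noteq> 0"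
      have r_bounds: "0 \<le> r" "r < int d" using \<open>0 < d\<close> by (simp_all add: r_def)
      then have "pos (nat r)" using \<open>r \<noteq> 0\<close> r mem unfolding pos_def by auto
      then have "d \<le> nat r" unfolding d_def by (rule Least_le)
      then show False using r_bounds by (simp add: le_nat_iff)
    qed
    then show ?thesis using r by blast
  qed
  then show ?thesis using that y0(1) by blast
qed

lemma pow_torsion_exponent:
  assumes "fst (dec c) = 0"
  shows "c [^]\<^bsub>A\<^esub> torsion_exponent (dec c) = \<one>\<^bsub>A\<^esub>"
proof -
  have "dec (c [^]\<^bsub>A\<^esub> torsion_exponent (dec c)) = dec \<one>\<^bsub>A\<^esub>"
    using assms by (simp del: A_simps add: dec_int_pow escale_torsion_exponent_multiple ezero_def)
  then show ?thesis by (simp only: dec_inject)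
qed

lemma finite_rcosets_delta:
  assumes Y: "subgroup Y A" and k: "k \<in> carrier Zprod"
  shows "finite ((\<lambda>y. Y #>\<^bsub>A\<^esub> delta k y) ` Y)"
proof -
  obtain y0 where y0: "y0 \<in> Y" and gen: "\<And>y. y \<in> Y \<Longrightarrow> \<exists>q::int. fst (dec (y \<otimes>\<^bsub>A\<^esub> y0 [^]\<^bsub>A\<^esub> q)) = 0"
    using subgroup_fst_generator[OF Y] by blast
  define c where "c = delta k y0"
  have "fst (dec c) = 0" by (simp add: c_def dec_delta edelta_def)
  then have "c [^]\<^bsub>A\<^esub> torsion_exponent (dec c) = \<one>\<^bsub>A\<^esub>" by (rule pow_torsion_exponent)
  moreover have "torsion_exponent (dec c) \<noteq> 0" using torsion_exponent_pos[OF dec_elems, of c] by simp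
  ultimately have "finite (carrier (subgroup_generated A {c}))"
    using A.finite_cyclic_subgroup_int by auto
  then have "finite (range (\<lambda>q::int. c [^]\<^bsub>A\<^esub> q))"
    by (simp add: A.carrier_subgroup_generated_by_singleton)
  moreover have "(\<lambda>y. Y #>\<^bsub>A\<^esub> delta k y) ` Y \<subseteq> (\<lambda>z. Y #>\<^bsub>A\<^esub> z) ` range (\<lambda>q::int. c [^]\<^bsub>A\<^esub> q)"
  proof clarify
    fix y assume y: "y \<in> Y"
    then obtain q :: int where q: "fst (dec (y \<otimes>\<^bsub>A\<^esub> y0 [^]\<^bsub>A\<^esub> q)) = 0" using gen by blast
    have "y \<otimes>\<^bsub>A\<^esub> y0 [^]\<^bsub>A\<^esub> q \<in> Y"
      by (rule subgroup.m_closed[OF Y y A.subgroup_int_pow_closed[OF Y y0]])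
    then have t: "delta k y \<otimes>\<^bsub>A\<^esub> c [^]\<^bsub>A\<^esub> q \<in> Y"
      using delta_mem_of_fst_zero[OF Y _ q k] by (simp only: delta_mult delta_int_pow c_def)
    have "c [^]\<^bsub>A\<^esub> q \<otimes>\<^bsub>A\<^esub> c [^]\<^bsub>A\<^esub> (- q) = \<one>\<^bsub>A\<^esub>"
      by (metis A.int_pow_mult UNIV_I A_simps(1) add.right_inverse int_pow_0)
    then have "delta k y = (delta k y \<otimes>\<^bsub>A\<^esub> c [^]\<^bsub>A\<^esub> q) \<otimes>\<^bsub>A\<^esub> c [^]\<^bsub>A\<^esub> (- q)"
      by (metis A.m_assoc A.r_one UNIV_I A_simps(1))
    then have "Y #>\<^bsub>A\<^esub> delta k y = Y #>\<^bsub>A\<^esub> ((delta k y \<otimes>\<^bsub>A\<^esub> c [^]\<^bsub>A\<^esub> q) \<otimes>\<^bsub>A\<^esub> c [^]\<^bsub>A\<^esub> (- q))"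
      by (rule arg_cong)
    also have "\<dots> = Y #>\<^bsub>A\<^esub> c [^]\<^bsub>A\<^esub> (- q)"
      by (rule A.rcoset_mult_absorb[OF Y t]) simp
    finally have "Y #>\<^bsub>A\<^esub> delta k y = Y #>\<^bsub>A\<^esub> c [^]\<^bsub>A\<^esub> (- q)" .
    then show "Y #>\<^bsub>A\<^esub> delta k y \<in> (\<lambda>z. Y #>\<^bsub>A\<^esub> z) ` range (\<lambda>q::int. c [^]\<^bsub>A\<^esub> q)" by blast
  qed
  ultimately show ?thesis using finite_subset by blast
qed

lemma alpha_inertial:
  assumes k: "k \<in> carrier Zprod"
  shows "inertial A (alpha k)"
  unfolding inertial_def
proof (intro conjI allI impI)
  show "alpha k \<in> auto A" using alpha_in_auto[OF k] .
  fix Y assume Y: "subgroup Y A"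
  have "RCOSETS (A\<lparr>carrier := set_mult A (alpha k ` Y) Y\<rparr>) Y \<subseteq> (\<lambda>y. Y #>\<^bsub>A\<^esub> delta k y) ` Y"
  proof
    fix C assume "C \<in> RCOSETS (A\<lparr>carrier := set_mult A (alpha k ` Y) Y\<rparr>) Y"
    then obtain y1 y2 where y: "y1 \<in> Y" "y2 \<in> Y" and C: "C = Y #>\<^bsub>A\<^esub> (alpha k y1 \<otimes>\<^bsub>A\<^esub> y2)"
      by (auto simp: RCOSETS_def set_mult_def r_coset_carrier_update)
    have "alpha k y1 \<otimes>\<^bsub>A\<^esub> y2 = (y1 \<otimes>\<^bsub>A\<^esub> y2) \<otimes>\<^bsub>A\<^esub> delta k y1"
      unfolding alpha_eq_delta_mult by (metis A.m_assoc A.m_comm UNIV_I A_simps(1))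
    then have "C = Y #>\<^bsub>A\<^esub> delta k y1"
      using C A.rcoset_mult_absorb[OF Y subgroup.m_closed[OF Y y]] by simp
    then show "C \<in> (\<lambda>y. Y #>\<^bsub>A\<^esub> delta k y) ` Y" using y by blast
  qed
  then show "finite (RCOSETS (A\<lparr>carrier := set_mult A (alpha k ` Y) Y\<rparr>) Y)"
    using finite_rcosets_delta[OF Y k] finite_subset by blast
qed

theorem propositionA:
  shows "\<exists>A :: nat monoid. comm_group A \<and> countable (carrier A) \<and> torsion_free_rank_one A \<and>
    (\<exists>\<Sigma>. subgroup \<Sigma> (AutoGroup A) \<and> \<Sigma> \<subseteq> IAut A \<and>
       (AutoGroup A)\<lparr>carrier := \<Sigma>\<rparr> \<cong> product_group nat_primes integer_mod_group \<and>
       \<Sigma> \<inter> FAut A = torsion_part ((AutoGroup A)\<lparr>carrier := \<Sigma>\<rparr>) \<and>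
       (AutoGroup A)\<lparr>carrier := torsion_part ((AutoGroup A)\<lparr>carrier := \<Sigma>\<rparr>)\<rparr>
          \<cong> sum_group nat_primes integer_mod_group)"
proof (intro exI conjI)
  let ?\<Sigma> = "alpha ` carrier Zprod"
  show "comm_group A" by (rule comm_group_A)
  show "countable (carrier A)" by simp
  show "torsion_free_rank_one A" by (rule torsion_free_rank_one_A)
  show "subgroup ?\<Sigma> (AutoGroup A)"
    using group_Zprod group_AutoGroup_A alpha_in_hom
    by (intro group_hom.img_is_subgroup) (simp add: group_hom_def group_hom_axioms_def)
  show "?\<Sigma> \<subseteq> IAut A"
    unfolding IAut_def using alpha_inertial by (auto intro: generate.incl)
  show "(AutoGroup A)\<lparr>carrier := ?\<Sigma>\<rparr> \<cong> Zprod"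
    by (rule iso_image_of_inj_hom[OF group_Zprod group_AutoGroup_A alpha_in_hom inj_on_alpha])
  have torsion: "torsion_part ((AutoGroup A)\<lparr>carrier := ?\<Sigma>\<rparr>) = alpha ` carrier Zsum"
    using torsion_part_image_of_inj_hom[OF group_Zprod group_AutoGroup_A alpha_in_hom inj_on_alpha]
    by (simp only: torsion_part_Zprod)
  show "?\<Sigma> \<inter> FAut A = torsion_part ((AutoGroup A)\<lparr>carrier := ?\<Sigma>\<rparr>)"
    unfolding torsion carrier_Zsum using alpha_in_FAut_iff inj_on_alpha by (auto simp: inj_on_def)
  have "inj_on alpha (carrier Zsum)" using inj_on_alpha by (rule inj_on_subset) (simp add: carrier_Zsum)
  then show "(AutoGroup A)\<lparr>carrier := torsion_part ((AutoGroup A)\<lparr>carrier := ?\<Sigma>\<rparr>)\<rparr> \<cong> Zsum"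
    unfolding torsion by (rule iso_image_of_inj_hom[OF group_Zsum group_AutoGroup_A alpha_in_hom_Zsum])
qed

end
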